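(* Let $\Gamma$ be a finite index subgroup of $\mathrm{SL}_2(\mathbb{Z})$ and let $f$ be a holomorphic modular form of weight $2$ for $\Gamma$. Define \[ h(\tau)=\int_i^{\tau} f(z)\,dz,\qquad \tau\in\mathfrak{H}. \] Then $h$ is $\rho$-equivariant for $\Gamma$ for some triangular representation $\rho$ of $\Gamma$.
   Context: $\mathfrak{H}$ denotes the complex upper half-plane. A holomorphic modular form of weight $2$ for $\Gamma$ is a holomorphic function $f$ on $\mathfrak{H}$ with $f(\gamma\tau)=(c\tau+d)^2f(\tau)$ for all $\gamma=\begin{pmatrix}a&b\\c&d\end{pmatrix}\in\Gamma$, holomorphic at the cusps. For a matrix $\begin{pmatrix}a&b\\c&d\end{pmatrix}$ and $z\in\mathbb{C}$, write $\begin{pmatrix}a&b\\c&d\end{pmatrix}\cdot z=\frac{az+b}{cz+d}$. Given a representation $\rho:\Gamma\to\mathrm{GL}_2(\mathbb{C})$, a meromorphic function $h$ on $\mathfrak{H}$ is called $\rho$-equivariant for $\Gamma$ if $h(\gamma\tau)=\rho(\gamma)\cdot h(\tau)$ for all $\gamma\in\Gamma$, $\tau\in\mathfrak{H}$ (linear fractional action on both sides). The representation $\rho$ is triangular if every $\rho(\gamma)$ is upper triangular. *)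

theory Defs
  imports "HOL-Complex_Analysis.Complex_Analysis" "HOL-Algebra.Coset"
begin

text \<open>2x2 matrices (a,b,c,d) standing for the matrix with rows (a b) and (c d).\<close>
type_synonym 'a mat2 = "'a \<times> 'a \<times> 'a \<times> 'a"

fun mat2_mult :: "'a::comm_ring_1 mat2 \<Rightarrow> 'a mat2 \<Rightarrow> 'a mat2" where
  "mat2_mult (a, b, c, d) (a', b', c', d') =
     (a * a' + b * c', a * b' + b * d', c * a' + d * c', c * b' + d * d')"

fun mat2_det :: "'a::comm_ring_1 mat2 \<Rightarrow> 'a" where
  "mat2_det (a, b, c, d) = a * d - b * c"

definition SL2Z :: "int mat2 monoid" where
  "SL2Z = \<lparr>carrier = {A. mat2_det A = 1}, mult = mat2_mult, one = (1, 0, 0, 1)\<rparr>"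

definition GL2C :: "complex mat2 monoid" where
  "GL2C = \<lparr>carrier = {A. mat2_det A \<noteq> 0}, mult = mat2_mult, one = (1, 0, 0, 1)\<rparr>"

fun moebius :: "complex mat2 \<Rightarrow> complex \<Rightarrow> complex" where
  "moebius (a, b, c, d) z = (a * z + b) / (c * z + d)"

fun of_int_mat2 :: "int mat2 \<Rightarrow> complex mat2" where
  "of_int_mat2 (a, b, c, d) = (of_int a, of_int b, of_int c, of_int d)"

fun automorphy_factor :: "int mat2 \<Rightarrow> complex \<Rightarrow> complex" where
  "automorphy_factor (a, b, c, d) z = of_int c * z + of_int d"

definition upper_half_plane :: "complex set" where
  "upper_half_plane = {z. Im z > 0}"

text \<open>Holomorphy at the cusps: for every \<alpha> in SL_2(Z) the slashed function
  f|\<alpha> (\<tau>) = (c\<tau>+d)^(-2) f(\<alpha>\<tau>) stays bounded as Im \<tau> \<rightarrow> \<infinity>.\<close>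
definition modular_form_wt2 :: "int mat2 set \<Rightarrow> (complex \<Rightarrow> complex) \<Rightarrow> bool" where
  "modular_form_wt2 \<Gamma> f \<longleftrightarrow>
     f holomorphic_on upper_half_plane \<and>
     (\<forall>\<gamma>\<in>\<Gamma>. \<forall>\<tau>\<in>upper_half_plane.
        f (moebius (of_int_mat2 \<gamma>) \<tau>) = (automorphy_factor \<gamma> \<tau>)\<^sup>2 * f \<tau>) \<and>
     (\<forall>\<alpha>\<in>carrier SL2Z. \<exists>y0 M. \<forall>\<tau>. Im \<tau> \<ge> y0 \<longrightarrow>
        norm (f (moebius (of_int_mat2 \<alpha>) \<tau>) / (automorphy_factor \<alpha> \<tau>)\<^sup>2) \<le> M)"

definition equivariant :: "int mat2 set \<Rightarrow> (int mat2 \<Rightarrow> complex mat2) \<Rightarrow> (complex \<Rightarrow> complex) \<Rightarrow> bool" where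
  "equivariant \<Gamma> \<rho> h \<longleftrightarrow>
     (\<forall>\<gamma>\<in>\<Gamma>. \<forall>\<tau>\<in>upper_half_plane. h (moebius (of_int_mat2 \<gamma>) \<tau>) = moebius (\<rho> \<gamma>) (h \<tau>))"

definition triangular_rep :: "int mat2 set \<Rightarrow> (int mat2 \<Rightarrow> complex mat2) \<Rightarrow> bool" where
  "triangular_rep \<Gamma> \<rho> \<longleftrightarrow> (\<forall>\<gamma>\<in>\<Gamma>. \<exists>a b d. \<rho> \<gamma> = (a, b, 0, d))"

end

theory Submission
  imports Defs
begin

text \<open>The integral h is a primitive of f on the upper half-plane. For \<gamma> = (a b; c d) in \<Gamma>
  the derivative of \<tau> \<mapsto> h(\<gamma>\<tau>) is f(\<gamma>\<tau>) (c\<tau> + d)^(-2) = f(\<tau>), so h(\<gamma>\<tau>) - h(\<tau>) is the constant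
  h(\<gamma>i). Since (\<gamma>\<delta>)i = \<gamma>(\<delta>i), this period is additive in \<gamma>, and \<gamma> \<mapsto> (1 h(\<gamma>i); 0 1) is a
  homomorphism into the unipotent upper triangular matrices by which h transforms.
  Neither the finite index of \<Gamma> nor holomorphy at the cusps is needed.\<close>

lemma automorphy_factor_nonzero:
  assumes "mat2_det \<gamma> \<noteq> 0" and "Im z > 0"
  shows "automorphy_factor \<gamma> z \<noteq> 0"
proof -
  obtain a b c d where \<gamma>: "\<gamma> = (a, b, c, d)" by (cases \<gamma>) auto
  show ?thesis
  proof (cases "c = 0")
    case True
    then show ?thesis using assms(1) by (simp add: \<gamma>)
  next
    case False
    then have "Im (automorphy_factor \<gamma> z) \<noteq> 0" using assms(2) by (simp add: \<gamma>)
    then show ?thesis by force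
  qed
qed

lemma Im_moebius_of_int_mat2:
  "Im (moebius (of_int_mat2 \<gamma>) z) = of_int (mat2_det \<gamma>) * Im z / (cmod (automorphy_factor \<gamma> z))\<^sup>2"
proof -
  obtain a b c d where \<gamma>: "\<gamma> = (a, b, c, d)" by (cases \<gamma>) auto
  have "Im (of_int a * z + of_int b) * Re (of_int c * z + of_int d)
        - Re (of_int a * z + of_int b) * Im (of_int c * z + of_int d) = of_int (a * d - b * c) * Im z"
    by (simp add: algebra_simps)
  then show ?thesis by (simp add: \<gamma> Im_divide')
qed

lemma moebius_in_upper_half_plane:
  assumes "mat2_det \<gamma> > 0" and "z \<in> upper_half_plane"
  shows "moebius (of_int_mat2 \<gamma>) z \<in> upper_half_plane"
  using assms automorphy_factor_nonzero[of \<gamma> z]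
  by (simp add: upper_half_plane_def Im_moebius_of_int_mat2)

lemma has_field_derivative_moebius_of_int_mat2:
  assumes "automorphy_factor \<gamma> z \<noteq> 0"
  shows "(moebius (of_int_mat2 \<gamma>) has_field_derivative
           of_int (mat2_det \<gamma>) / (automorphy_factor \<gamma> z)\<^sup>2) (at z)"
proof -
  obtain a b c d where \<gamma>: "\<gamma> = (a, b, c, d)" by (cases \<gamma>) auto
  have "moebius (of_int_mat2 \<gamma>) = (\<lambda>z. (of_int a * z + of_int b) / (of_int c * z + of_int d))"
    by (simp add: \<gamma> fun_eq_iff)
  moreover have "((\<lambda>z. (of_int a * z + of_int b) / (of_int c * z + of_int d)) has_field_derivative
      (of_int a * (of_int c * z + of_int d) - (of_int a * z + of_int b) * of_int c)
        / (of_int c * z + of_int d)\<^sup>2) (at z)"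
    using assms by (auto intro!: derivative_eq_intros simp: \<gamma> power2_eq_square)
  moreover have "of_int a * (of_int c * z + of_int d) - (of_int a * z + of_int b) * of_int c
      = (of_int (mat2_det \<gamma>) :: complex)"
    by (simp add: \<gamma> algebra_simps)
  ultimately show ?thesis by (simp add: \<gamma>)
qed

text \<open>Only the inner factor needs to be nonzero: if the outer one vanishes, both sides
  are divisions by zero.\<close>

lemma moebius_of_int_mat2_mult:
  assumes "automorphy_factor \<delta> z \<noteq> 0"
  shows "moebius (of_int_mat2 (mat2_mult \<gamma> \<delta>)) z
       = moebius (of_int_mat2 \<gamma>) (moebius (of_int_mat2 \<delta>) z)"
proof -
  obtain a b c d where \<gamma>: "\<gamma> = (a, b, c, d)" by (cases \<gamma>) auto
  obtain a' b' c' d' where \<delta>: "\<delta> = (a', b', c', d')" by (cases \<delta>) auto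
  define u where "u = of_int a' * z + (of_int b' :: complex)"
  define w where "w = of_int c' * z + (of_int d' :: complex)"
  have "w \<noteq> 0" using assms by (simp add: \<delta> w_def)
  have "moebius (of_int_mat2 (mat2_mult \<gamma> \<delta>)) z
      = (of_int a * u + of_int b * w) / (of_int c * u + of_int d * w)"
    by (simp add: \<gamma> \<delta> u_def w_def algebra_simps)
  also have "\<dots> = ((of_int a * (u / w) + of_int b) * w) / ((of_int c * (u / w) + of_int d) * w)"
    using \<open>w \<noteq> 0\<close> by (simp add: algebra_simps)
  also have "\<dots> = (of_int a * (u / w) + of_int b) / (of_int c * (u / w) + of_int d)"
    using \<open>w \<noteq> 0\<close> by simp
  also have "\<dots> = moebius (of_int_mat2 \<gamma>) (moebius (of_int_mat2 \<delta>) z)"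
    by (simp add: \<gamma> \<delta> u_def w_def)
  finally show ?thesis .
qed

lemma convex_upper_half_plane: "convex upper_half_plane"
  unfolding upper_half_plane_def by (rule convex_halfspace_Im_gt)

lemma open_upper_half_plane: "open upper_half_plane"
  unfolding upper_half_plane_def by (rule open_halfspace_Im_gt)

lemma ii_in_upper_half_plane: "\<i> \<in> upper_half_plane"
  by (simp add: upper_half_plane_def)

lemma has_field_derivative_contour_integral_linepath:
  assumes f: "f holomorphic_on S" and S: "convex S" "open S" and "a \<in> S" "x \<in> S"
  shows "((\<lambda>x. contour_integral (linepath a x) f) has_field_derivative f x) (at x)"
proof -
  have "((\<lambda>x. contour_integral (linepath a x) f) has_field_derivative f x) (at x within S)"
  proof (rule triangle_contour_integrals_convex_primitive[OF _ \<open>a \<in> S\<close> S(1) \<open>x \<in> S\<close>])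
    show "continuous_on S f"
      using f by (rule holomorphic_on_imp_continuous_on)
    fix b c assume "b \<in> S" "c \<in> S"
    then have "convex hull {a, b, c} \<subseteq> S"
      using \<open>a \<in> S\<close> S(1) by (intro hull_minimal) auto
    then have "f holomorphic_on convex hull {a, b, c}"
      using f by (rule holomorphic_on_subset[rotated])
    then show "contour_integral (linepath a b) f + contour_integral (linepath b c) f +
               contour_integral (linepath c a) f = 0"
      by (rule has_chain_integral_chain_integral3[OF Cauchy_theorem_triangle])
  qed
  then show ?thesis
    by (simp only: at_within_open[OF \<open>x \<in> S\<close> S(2)])
qed

definition eichler_integral :: "(complex \<Rightarrow> complex) \<Rightarrow> complex \<Rightarrow> complex" where
  "eichler_integral f = (\<lambda>\<tau>. contour_integral (linepath \<i> \<tau>) f)"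

definition eichler_period :: "(complex \<Rightarrow> complex) \<Rightarrow> int mat2 \<Rightarrow> complex" where
  "eichler_period f \<gamma> = eichler_integral f (moebius (of_int_mat2 \<gamma>) \<i>)"

definition period_rep :: "(complex \<Rightarrow> complex) \<Rightarrow> int mat2 \<Rightarrow> complex mat2" where
  "period_rep f \<gamma> = (1, eichler_period f \<gamma>, 0, 1)"

lemma has_field_derivative_eichler_integral:
  assumes "f holomorphic_on upper_half_plane" and "\<tau> \<in> upper_half_plane"
  shows "(eichler_integral f has_field_derivative f \<tau>) (at \<tau>)"
  unfolding eichler_integral_def
  using has_field_derivative_contour_integral_linepath[OF assms(1) convex_upper_half_plane
      open_upper_half_plane ii_in_upper_half_plane assms(2)] .

lemma eichler_integral_moebius:
  assumes f: "f holomorphic_on upper_half_plane"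
    and det: "mat2_det \<gamma> = 1"
    and weight2: "\<And>\<tau>. \<tau> \<in> upper_half_plane \<Longrightarrow>
                    f (moebius (of_int_mat2 \<gamma>) \<tau>) = (automorphy_factor \<gamma> \<tau>)\<^sup>2 * f \<tau>"
    and \<tau>: "\<tau> \<in> upper_half_plane"
  shows "eichler_integral f (moebius (of_int_mat2 \<gamma>) \<tau>) = eichler_integral f \<tau> + eichler_period f \<gamma>"
proof -
  let ?h = "eichler_integral f" and ?M = "moebius (of_int_mat2 \<gamma>)"
  have deriv_zero: "((\<lambda>x. ?h (?M x) - ?h x) has_field_derivative 0) (at x within upper_half_plane)"
    if x: "x \<in> upper_half_plane" for x
  proof -
    have nonzero: "automorphy_factor \<gamma> x \<noteq> 0"
      using det x by (intro automorphy_factor_nonzero) (auto simp: upper_half_plane_def)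
    have "?M x \<in> upper_half_plane"
      using det x by (simp add: moebius_in_upper_half_plane)
    then have h': "(?h has_field_derivative f (?M x)) (at (?M x))"
      using f by (rule has_field_derivative_eichler_integral[rotated])
    have M': "(?M has_field_derivative 1 / (automorphy_factor \<gamma> x)\<^sup>2) (at x)"
      using has_field_derivative_moebius_of_int_mat2[OF nonzero] det by simp
    have "((\<lambda>x. ?h (?M x) - ?h x) has_field_derivative
                 f (?M x) * (1 / (automorphy_factor \<gamma> x)\<^sup>2) - f x) (at x)"
      by (rule DERIV_diff[OF DERIV_chain2[OF h' M'] has_field_derivative_eichler_integral[OF f x]])
    also have "f (?M x) * (1 / (automorphy_factor \<gamma> x)\<^sup>2) - f x = 0"
      using weight2[OF x] nonzero by simp
    finally show ?thesis
      by (rule has_field_derivative_at_within)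
  qed
  obtain k where "\<forall>x\<in>upper_half_plane. ?h (?M x) - ?h x = k"
    using has_field_derivative_zero_constant[OF convex_upper_half_plane deriv_zero] by blast
  with \<tau> ii_in_upper_half_plane
  have "?h (?M \<tau>) - ?h \<tau> = ?h (?M \<i>) - ?h \<i>"
    by simp
  then show ?thesis
    by (simp add: eichler_period_def eichler_integral_def algebra_simps)
qed

lemma eichler_period_mult:
  assumes f: "f holomorphic_on upper_half_plane"
    and det: "mat2_det \<gamma> = 1" "mat2_det \<delta> > 0"
    and weight2: "\<And>\<tau>. \<tau> \<in> upper_half_plane \<Longrightarrow>
                    f (moebius (of_int_mat2 \<gamma>) \<tau>) = (automorphy_factor \<gamma> \<tau>)\<^sup>2 * f \<tau>"
  shows "eichler_period f (mat2_mult \<gamma> \<delta>) = eichler_period f \<gamma> + eichler_period f \<delta>"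
proof -
  have "automorphy_factor \<delta> \<i> \<noteq> 0"
    using det(2) by (intro automorphy_factor_nonzero) auto
  then have "eichler_period f (mat2_mult \<gamma> \<delta>)
      = eichler_integral f (moebius (of_int_mat2 \<gamma>) (moebius (of_int_mat2 \<delta>) \<i>))"
    by (simp add: eichler_period_def moebius_of_int_mat2_mult)
  also have "\<dots> = eichler_period f \<delta> + eichler_period f \<gamma>"
    using eichler_integral_moebius[OF f det(1) weight2]
      moebius_in_upper_half_plane[OF det(2) ii_in_upper_half_plane]
    by (simp add: eichler_period_def)
  finally show ?thesis by simp
qed

lemma period_rep_hom:
  assumes f: "f holomorphic_on upper_half_plane"
    and \<Gamma>: "\<Gamma> \<subseteq> carrier SL2Z"
    and weight2: "\<And>\<gamma> \<tau>. \<gamma> \<in> \<Gamma> \<Longrightarrow> \<tau> \<in> upper_half_plane \<Longrightarrow>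
                    f (moebius (of_int_mat2 \<gamma>) \<tau>) = (automorphy_factor \<gamma> \<tau>)\<^sup>2 * f \<tau>"
  shows "period_rep f \<in> hom (SL2Z\<lparr>carrier := \<Gamma>\<rparr>) GL2C"
proof (rule homI)
  fix \<gamma> show "period_rep f \<gamma> \<in> carrier GL2C"
    by (simp add: period_rep_def GL2C_def)
next
  fix \<gamma> \<delta> assume "\<gamma> \<in> carrier (SL2Z\<lparr>carrier := \<Gamma>\<rparr>)" "\<delta> \<in> carrier (SL2Z\<lparr>carrier := \<Gamma>\<rparr>)"
  then have "\<gamma> \<in> \<Gamma>" "mat2_det \<gamma> = 1" "mat2_det \<delta> = 1"
    using \<Gamma> by (auto simp: SL2Z_def)
  then have "eichler_period f (mat2_mult \<gamma> \<delta>) = eichler_period f \<gamma> + eichler_period f \<delta>"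
    using weight2 by (intro eichler_period_mult[OF f]) auto
  then show "period_rep f (\<gamma> \<otimes>\<^bsub>SL2Z\<lparr>carrier := \<Gamma>\<rparr>\<^esub> \<delta>) = period_rep f \<gamma> \<otimes>\<^bsub>GL2C\<^esub> period_rep f \<delta>"
    by (simp add: period_rep_def SL2Z_def GL2C_def)
qed

lemma equivariant_period_rep:
  assumes f: "f holomorphic_on upper_half_plane"
    and \<Gamma>: "\<Gamma> \<subseteq> carrier SL2Z"
    and weight2: "\<And>\<gamma> \<tau>. \<gamma> \<in> \<Gamma> \<Longrightarrow> \<tau> \<in> upper_half_plane \<Longrightarrow>
                    f (moebius (of_int_mat2 \<gamma>) \<tau>) = (automorphy_factor \<gamma> \<tau>)\<^sup>2 * f \<tau>"
  shows "equivariant \<Gamma> (period_rep f) (eichler_integral f)"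
  unfolding equivariant_def
proof (intro ballI)
  fix \<gamma> \<tau> assume "\<gamma> \<in> \<Gamma>" "\<tau> \<in> upper_half_plane"
  moreover from this have "mat2_det \<gamma> = 1"
    using \<Gamma> by (auto simp: SL2Z_def)
  ultimately show "eichler_integral f (moebius (of_int_mat2 \<gamma>) \<tau>)
      = moebius (period_rep f \<gamma>) (eichler_integral f \<tau>)"
    using eichler_integral_moebius[OF f _ weight2] by (simp add: period_rep_def)
qed

theorem proposition4p1:
  fixes \<Gamma> :: "int mat2 set" and f :: "complex \<Rightarrow> complex"
  assumes "subgroup \<Gamma> SL2Z"
    and "finite (rcosets\<^bsub>SL2Z\<^esub> \<Gamma>)"
    and "modular_form_wt2 \<Gamma> f"
  shows "\<exists>\<rho>. \<rho> \<in> hom (SL2Z\<lparr>carrier := \<Gamma>\<rparr>) GL2C \<and> triangular_rep \<Gamma> \<rho> \<and>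
           equivariant \<Gamma> \<rho> (\<lambda>\<tau>. contour_integral (linepath \<i> \<tau>) f)"
proof (intro exI conjI)
  have \<Gamma>: "\<Gamma> \<subseteq> carrier SL2Z"
    using assms(1) by (rule subgroup.subset)
  note f = assms(3)[unfolded modular_form_wt2_def]
  show "period_rep f \<in> hom (SL2Z\<lparr>carrier := \<Gamma>\<rparr>) GL2C"
    using f \<Gamma> by (intro period_rep_hom) auto
  show "triangular_rep \<Gamma> (period_rep f)"
    by (simp add: triangular_rep_def period_rep_def)
  show "equivariant \<Gamma> (period_rep f) (\<lambda>\<tau>. contour_integral (linepath \<i> \<tau>) f)"
    using f \<Gamma> equivariant_period_rep[of f \<Gamma>] by (auto simp: eichler_integral_def)
qed

end
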